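(* Let $\varepsilon\in(0,1)$. Let $M=(E,\mathcal{I})$ be a matroid, $u:E\to\mathbb{Z}_{\ge0}$ integer capacities and $k\in\mathbb{N}$. Suppose bases $B_1,\dots,B_k$ (with insertion levels) and levels $\ell:E\to\mathbb{Z}_{\ge0}$ satisfy invariants (I1)–(I3) with height $h>1/\varepsilon+2$. Then there exists a level $j$ such that $$u(E_{<j})+k\,\mathrm{rank}(E_{\ge j})\ \le\ (1+\varepsilon)\sum_{e\in E}\min\{u(e),x(e)\}.$$ Consequently $B_1,\dots,B_k$ is a $1/(1+\varepsilon)$-approximately maximum solution of the $k$-fold matroid union problem and $E_{\ge j}$ is a $(1+\varepsilon)$-approximately minimum dual solution.
   Context: For $e\in E$, $x(e)=|\{i: e\in B_i\}|$; $e$ is uncovered if $x(e)<u(e)$. $u(T)=\sum_{e\in T}u(e)$. The $k$-fold matroid union problem maximizes $\sum_e\min\{u(e),x(e)\}$ over $k$ bases; the dual minimizes $k\,\mathrm{rank}(S)+u(E\setminus S)$ over $S\subseteq E$. Each element $e\in B_i$ carries an insertion level (the value of $\ell(e)$ when $e$ was inserted into $B_i$; levels never decrease, so insertion levels are at most current levels). $E_j=\{e:\ell(e)=j\}$ and analogously $E_{<j},E_{\ge j},E_{>j}$; $B_{i,j}$ (resp. $B_{i,\ge j}$) denotes the elements of $B_i$ with insertion level $j$ (resp. at least $j$). Invariants: (I1) $\ell(e)=0$ whenever $e$ lies in strictly more than $u(e)$ bases; (I2) for all $i$ and $j$, $B_{i,\ge j}$ spans $E_{>j}$; (I3) every uncovered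 $e$ has $\ell(e)\ge h$. *)

theory Defs
  imports Complex_Main
begin

definition matroid :: "'a set \<Rightarrow> ('a set \<Rightarrow> bool) \<Rightarrow> bool" where
  "matroid E indep \<longleftrightarrow>
     finite E \<and>
     (\<forall>I. indep I \<longrightarrow> I \<subseteq> E) \<and>
     indep {} \<and>
     (\<forall>I J. indep J \<and> I \<subseteq> J \<longrightarrow> indep I) \<and>
     (\<forall>I J. indep I \<and> indep J \<and> card I < card J \<longrightarrow> (\<exists>e \<in> J - I. indep (insert e I)))"

definition mrank :: "('a set \<Rightarrow> bool) \<Rightarrow> 'a set \<Rightarrow> nat" where
  "mrank indep S = Max {card I | I. I \<subseteq> S \<and> indep I}"

definition is_basis :: "'a set \<Rightarrow> ('a set \<Rightarrow> bool) \<Rightarrow> 'a set \<Rightarrow> bool" where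
  "is_basis E indep B \<longleftrightarrow> B \<subseteq> E \<and> indep B \<and> (\<forall>e \<in> E - B. \<not> indep (insert e B))"

definition spans :: "('a set \<Rightarrow> bool) \<Rightarrow> 'a set \<Rightarrow> 'a set \<Rightarrow> bool" where
  "spans indep S T \<longleftrightarrow> mrank indep (S \<union> T) = mrank indep S"

text \<open>Multiplicity x(e): number of bases among B_1..B_k (indexed 0..k-1) containing e.\<close>
definition mult :: "nat \<Rightarrow> (nat \<Rightarrow> 'a set) \<Rightarrow> 'a \<Rightarrow> nat" where
  "mult k B e = card {i \<in> {..<k}. e \<in> B i}"

definition union_value :: "'a set \<Rightarrow> ('a \<Rightarrow> nat) \<Rightarrow> nat \<Rightarrow> (nat \<Rightarrow> 'a set) \<Rightarrow> nat" where
  "union_value E u k B = (\<Sum>e\<in>E. min (u e) (mult k B e))"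

definition dual_value :: "'a set \<Rightarrow> ('a set \<Rightarrow> bool) \<Rightarrow> ('a \<Rightarrow> nat) \<Rightarrow> nat \<Rightarrow> 'a set \<Rightarrow> nat" where
  "dual_value E indep u k S = k * mrank indep S + sum u (E - S)"

text \<open>Invariants (I1)-(I3). lev = current level \<ell>, ins i e = insertion level of e in B_i.\<close>
definition invariants ::
  "'a set \<Rightarrow> ('a set \<Rightarrow> bool) \<Rightarrow> ('a \<Rightarrow> nat) \<Rightarrow> nat \<Rightarrow> (nat \<Rightarrow> 'a set)
     \<Rightarrow> (nat \<Rightarrow> 'a \<Rightarrow> nat) \<Rightarrow> ('a \<Rightarrow> nat) \<Rightarrow> nat \<Rightarrow> bool" where
  "invariants E indep u k B ins lev h \<longleftrightarrow>
     (\<forall>i<k. is_basis E indep (B i)) \<and>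
     (\<forall>i<k. \<forall>e\<in>B i. ins i e \<le> lev e) \<and>
     (\<forall>e\<in>E. mult k B e > u e \<longrightarrow> lev e = 0) \<and>
     (\<forall>i<k. \<forall>j::nat. spans indep {e \<in> B i. ins i e \<ge> j} {e \<in> E. lev e > j}) \<and>
     (\<forall>e\<in>E. mult k B e < u e \<longrightarrow> lev e \<ge> h)"

end

theory Submission
  imports Defs
begin

text \<open>
  Call min (u e) (x e) the contribution of e.  The layers E_1, ..., E_{h-1} are disjoint,
  so one of them, E_l, contributes at most 1/(h-1) < \<epsilon> of the total value; take j = l + 1.
  Elements below level j < h are covered by (I3), so their capacity equals their
  contribution.  By (I2) the elements of B_i inserted at level \<ge> l span E_{>l}, and they
  lie in E_{\<ge>l}; hence rank(E_{\<ge>j}) \<le> |B_i \<inter> E_{\<ge>l}|, and summing over i bounds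
  k rank(E_{\<ge>j}) by the total multiplicity of E_{\<ge>l}, which by (I1) (as l \<ge> 1) is its
  contribution.  So the dual value of E_{\<ge>j} exceeds the primal value by at most the
  contribution of E_l, and weak duality yields both approximation guarantees.
\<close>

lemma matroid_finite: "matroid E indep \<Longrightarrow> finite E"
  unfolding matroid_def by auto

lemma finite_card_indep_subsets:
  assumes "matroid E indep"
  shows "finite {card I | I. I \<subseteq> S \<and> indep I}"
proof -
  have "{card I | I. I \<subseteq> S \<and> indep I} \<subseteq> card ` Pow E"
    using assms unfolding matroid_def by auto
  then show ?thesis
    using matroid_finite[OF assms] by (meson finite_Pow_iff finite_imageI finite_subset)
qed

lemma card_le_mrank:
  assumes "matroid E indep" "indep I" "I \<subseteq> S"
  shows "card I \<le> mrank indep S"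
  unfolding mrank_def using assms finite_card_indep_subsets[OF assms(1)] by (intro Max_ge) auto

lemma mrank_attained:
  assumes "matroid E indep"
  obtains I where "I \<subseteq> S" "indep I" "mrank indep S = card I"
proof -
  have "indep {}"
    using assms unfolding matroid_def by auto
  then have "{card I | I. I \<subseteq> S \<and> indep I} \<noteq> {}"
    by blast
  from Max_in[OF finite_card_indep_subsets[OF assms] this] show ?thesis
    using that unfolding mrank_def by auto
qed

lemma mrank_le_card:
  assumes "matroid E indep" "finite S"
  shows "mrank indep S \<le> card S"
  using assms by (metis mrank_attained card_mono)

lemma mrank_mono:
  assumes "matroid E indep" "S \<subseteq> T"
  shows "mrank indep S \<le> mrank indep T"
  using assms by (metis mrank_attained card_le_mrank order_trans)

lemma sum_card_Int_eq_sum_mult: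
  assumes "finite A"
  shows "(\<Sum>i<k. card (B i \<inter> A)) = (\<Sum>e\<in>A. mult k B e)"
proof -
  have "mult k B e = (\<Sum>i<k. if e \<in> B i then 1 else 0)" for e
    unfolding mult_def by (simp add: sum.If_cases) (metis Collect_conj_eq lessThan_def)
  moreover have "card (B i \<inter> A) = (\<Sum>e\<in>A. if e \<in> B i then 1 else 0)" for i
    using assms by (simp add: sum.If_cases Int_commute)
  ultimately show ?thesis
    by (simp add: sum.swap[of _ A])
qed

lemma union_value_le_dual_value:
  assumes M: "matroid E indep" and B: "\<forall>i<k. is_basis E indep (B i)" and S: "S \<subseteq> E"
  shows "union_value E u k B \<le> dual_value E indep u k S"
proof -
  have fE: "finite E"
    using matroid_finite[OF M] .
  then have fS: "finite S"
    using S finite_subset by blast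
  have "union_value E u k B
      = (\<Sum>e\<in>E - S. min (u e) (mult k B e)) + (\<Sum>e\<in>S. min (u e) (mult k B e))"
    unfolding union_value_def by (rule sum.subset_diff[OF S fE])
  also have "\<dots> \<le> sum u (E - S) + (\<Sum>e\<in>S. mult k B e)"
    by (intro add_mono sum_mono) auto
  also have "(\<Sum>e\<in>S. mult k B e) = (\<Sum>i<k. card (B i \<inter> S))"
    using sum_card_Int_eq_sum_mult[OF fS] by simp
  also have "\<dots> \<le> (\<Sum>i<k. mrank indep S)"
  proof (intro sum_mono)
    fix i assume "i \<in> {..<k}"
    then have "indep (B i)"
      using B unfolding is_basis_def by auto
    then have "indep (B i \<inter> S)"
      using M unfolding matroid_def by blast
    then show "card (B i \<inter> S) \<le> mrank indep S"
      using card_le_mrank[OF M] by blast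
  qed
  finally show ?thesis
    unfolding dual_value_def by simp
qed

lemma approximately_optimal_by_dual:
  assumes M: "matroid E indep" and B: "\<forall>i<k. is_basis E indep (B i)"
    and "0 \<le> \<epsilon>"
    and dual: "real (dual_value E indep u k T) \<le> (1 + \<epsilon>) * real (union_value E u k B)"
    and T: "T \<subseteq> E"
  shows "\<forall>B'. (\<forall>i<k. is_basis E indep (B' i)) \<longrightarrow>
            real (union_value E u k B') \<le> (1 + \<epsilon>) * real (union_value E u k B)"
      (is ?primal)
    and "\<forall>S \<subseteq> E.
            real (dual_value E indep u k T) \<le> (1 + \<epsilon>) * real (dual_value E indep u k S)"
      (is ?dual)
proof -
  show ?primal
  proof (intro allI impI)
    fix B' assume "\<forall>i<k. is_basis E indep (B' i)"
    then have "union_value E u k B' \<le> dual_value E indep u k T"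
      using union_value_le_dual_value[OF M _ T] by blast
    then show "real (union_value E u k B') \<le> (1 + \<epsilon>) * real (union_value E u k B)"
      using dual by linarith
  qed
  show ?dual
  proof (intro allI impI)
    fix S assume "S \<subseteq> E"
    then have "real (union_value E u k B) \<le> real (dual_value E indep u k S)"
      using union_value_le_dual_value[OF M B] by simp
    then have "(1 + \<epsilon>) * real (union_value E u k B)
        \<le> (1 + \<epsilon>) * real (dual_value E indep u k S)"
      using \<open>0 \<le> \<epsilon>\<close> by (intro mult_left_mono) auto
    then show "real (dual_value E indep u k T) \<le> (1 + \<epsilon>) * real (dual_value E indep u k S)"
      using dual by linarith
  qed
qed

lemma dual_value_upper_level_set:
  fixes lev :: "'a \<Rightarrow> nat"
  shows "dual_value E indep u k {e \<in> E. j \<le> lev e}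
     = sum u {e \<in> E. lev e < j} + k * mrank indep {e \<in> E. j \<le> lev e}"
proof -
  have "E - {e \<in> E. j \<le> lev e} = {e \<in> E. lev e < j}"
    by auto
  then show ?thesis
    unfolding dual_value_def by simp
qed

lemma exists_card_mult_le_sum:
  fixes f :: "'b \<Rightarrow> nat"
  assumes "finite A" "A \<noteq> {}"
  shows "\<exists>x\<in>A. card A * f x \<le> sum f A"
proof -
  have "Min (f ` A) \<in> f ` A"
    using assms by simp
  then show ?thesis
    using card_Min_le_sum[OF assms(1), of f] by force
qed

lemma sum_level_layers_le:
  fixes g :: "'a \<Rightarrow> nat"
  assumes "finite E" "finite L"
  shows "(\<Sum>l\<in>L. \<Sum>e\<in>{e \<in> E. lev e = l}. g e) \<le> sum g E"
proof -
  have "(\<Sum>l\<in>L. \<Sum>e\<in>{e \<in> E. lev e = l}. g e)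
      = (\<Sum>l\<in>L. sum g {e \<in> {e \<in> E. lev e \<in> L}. lev e = l})"
    by (intro sum.cong refl arg_cong2[where f = sum]) auto
  also have "\<dots> = sum g {e \<in> E. lev e \<in> L}"
    using assms by (intro sum.group) auto
  also have "\<dots> \<le> sum g E"
    using assms by (intro sum_mono2) auto
  finally show ?thesis .
qed

lemma exists_light_level:
  fixes g :: "'a \<Rightarrow> nat" and \<epsilon> :: real
  assumes "finite E" "0 < \<epsilon>" "1 / \<epsilon> < real n"
  shows "\<exists>l\<in>{1..n}. real (\<Sum>e\<in>{e \<in> E. lev e = l}. g e) \<le> \<epsilon> * real (sum g E)"
proof -
  define layer where "layer l = (\<Sum>e\<in>{e \<in> E. lev e = l}. g e)" for l
  have "0 < 1 / \<epsilon>"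
    using assms(2) by simp
  then have "n \<noteq> 0"
    using assms(3) by (intro notI) simp
  then obtain l where l: "l \<in> {1..n}" and averaging: "n * layer l \<le> (\<Sum>l\<in>{1..n}. layer l)"
    using exists_card_mult_le_sum[of "{1..n}" layer] by auto
  note averaging
  also have "\<dots> \<le> sum g E"
    unfolding layer_def using sum_level_layers_le[OF assms(1)] by blast
  finally have scaled: "real n * real (layer l) \<le> real (sum g E)"
    by (metis of_nat_le_iff of_nat_mult)
  have "1 \<le> \<epsilon> * real n"
    using assms(2,3) by (simp add: field_simps)
  then have "real (layer l) \<le> \<epsilon> * real n * real (layer l)"
    using mult_right_mono[of 1 "\<epsilon> * real n" "real (layer l)"] by simp
  also have "\<dots> \<le> \<epsilon> * real (sum g E)"
    using scaled assms(2)
    by (simp add: mult.assoc mult_left_mono)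
  finally show ?thesis
    using l unfolding layer_def by blast
qed

lemma mrank_above_level_le_card:
  assumes M: "matroid E indep" and inv: "invariants E indep u k B ins lev h" and i: "i < k"
  shows "mrank indep {e \<in> E. l < lev e} \<le> card (B i \<inter> {e \<in> E. l \<le> lev e})"
proof -
  let ?S = "{e \<in> B i. l \<le> ins i e}"
  have BE: "B i \<subseteq> E"
    using inv i unfolding invariants_def is_basis_def by auto
  have fE: "finite E"
    using matroid_finite[OF M] .
  have "mrank indep {e \<in> E. l < lev e} \<le> mrank indep (?S \<union> {e \<in> E. l < lev e})"
    by (intro mrank_mono[OF M]) auto
  also have "\<dots> = mrank indep ?S"
    using inv i unfolding invariants_def spans_def by auto
  also have "\<dots> \<le> card ?S"
    using fE BE by (intro mrank_le_card[OF M]) (auto intro: finite_subset)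
  also have "\<dots> \<le> card (B i \<inter> {e \<in> E. l \<le> lev e})"
    using fE BE inv i unfolding invariants_def by (intro card_mono) (auto intro: order_trans)
  finally show ?thesis .
qed

lemma sum_split_at_level:
  fixes lev :: "'a \<Rightarrow> nat"
  assumes "finite A"
  shows "sum f A = sum f {e \<in> A. lev e < j} + sum f {e \<in> A. j \<le> lev e}"
proof -
  have "A \<inter> {e. lev e < j} = {e \<in> A. lev e < j}" "A - {e. lev e < j} = {e \<in> A. j \<le> lev e}"
    by auto
  then show ?thesis
    using sum.Int_Diff[OF assms, of f "{e. lev e < j}"] by simp
qed

lemma mult_mrank_above_level_le:
  assumes M: "matroid E indep" and inv: "invariants E indep u k B ins lev h" and "1 \<le> l"
  shows "k * mrank indep {e \<in> E. l < lev e} \<le> (\<Sum>e\<in>{e \<in> E. l \<le> lev e}. min (u e) (mult k B e))"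
proof -
  have "k * mrank indep {e \<in> E. l < lev e} = (\<Sum>i<k. mrank indep {e \<in> E. l < lev e})"
    by simp
  also have "\<dots> \<le> (\<Sum>i<k. card (B i \<inter> {e \<in> E. l \<le> lev e}))"
    using mrank_above_level_le_card[OF M inv] by (intro sum_mono) simp
  also have "\<dots> = (\<Sum>e\<in>{e \<in> E. l \<le> lev e}. mult k B e)"
    using matroid_finite[OF M] by (intro sum_card_Int_eq_sum_mult) auto
  also have "\<dots> = (\<Sum>e\<in>{e \<in> E. l \<le> lev e}. min (u e) (mult k B e))"
  proof (intro sum.cong refl)
    fix e assume e: "e \<in> {e \<in> E. l \<le> lev e}"
    then have "\<not> u e < mult k B e"
      using inv \<open>1 \<le> l\<close> unfolding invariants_def by auto
    then show "mult k B e = min (u e) (mult k B e)"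
      by simp
  qed
  finally show ?thesis .
qed

lemma dual_value_le_union_value_plus_layer:
  assumes M: "matroid E indep" and inv: "invariants E indep u k B ins lev h"
    and "1 \<le> l" "l < h"
  shows "dual_value E indep u k {e \<in> E. Suc l \<le> lev e}
     \<le> union_value E u k B + (\<Sum>e\<in>{e \<in> E. lev e = l}. min (u e) (mult k B e))"
proof -
  define c where "c e = min (u e) (mult k B e)" for e
  have fE: "finite E"
    using matroid_finite[OF M] .
  have "k * mrank indep {e \<in> E. Suc l \<le> lev e} \<le> (\<Sum>e\<in>{e \<in> E. l \<le> lev e}. c e)"
    using mult_mrank_above_level_le[OF M inv \<open>1 \<le> l\<close>] unfolding c_def by (simp add: Suc_le_eq)
  also have "\<dots> = (\<Sum>e\<in>{e \<in> E. lev e = l}. c e) + (\<Sum>e\<in>{e \<in> E. Suc l \<le> lev e}. c e)"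
  proof -
    have "{e \<in> {e \<in> E. l \<le> lev e}. lev e < Suc l} = {e \<in> E. lev e = l}"
      "{e \<in> {e \<in> E. l \<le> lev e}. Suc l \<le> lev e} = {e \<in> E. Suc l \<le> lev e}"
      by auto
    then show ?thesis
      using sum_split_at_level[of "{e \<in> E. l \<le> lev e}" c lev "Suc l"] fE by simp
  qed
  finally have rank_part: "k * mrank indep {e \<in> E. Suc l \<le> lev e}
      \<le> (\<Sum>e\<in>{e \<in> E. lev e = l}. c e) + (\<Sum>e\<in>{e \<in> E. Suc l \<le> lev e}. c e)" .
  have covered_part: "sum u {e \<in> E. lev e < Suc l} = (\<Sum>e\<in>{e \<in> E. lev e < Suc l}. c e)"
  proof (intro sum.cong refl)
    fix e assume "e \<in> {e \<in> E. lev e < Suc l}"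
    then have "\<not> mult k B e < u e"
      using inv \<open>l < h\<close> unfolding invariants_def by auto
    then show "u e = c e"
      unfolding c_def by simp
  qed
  have "union_value E u k B
      = (\<Sum>e\<in>{e \<in> E. lev e < Suc l}. c e) + (\<Sum>e\<in>{e \<in> E. Suc l \<le> lev e}. c e)"
    unfolding union_value_def c_def by (rule sum_split_at_level[OF fE])
  then show ?thesis
    using rank_part covered_part unfolding dual_value_upper_level_set c_def by linarith
qed

theorem mainTheorem3:
  fixes E :: "'a set" and indep :: "'a set \<Rightarrow> bool" and u :: "'a \<Rightarrow> nat"
    and k :: nat and B :: "nat \<Rightarrow> 'a set" and ins :: "nat \<Rightarrow> 'a \<Rightarrow> nat"
    and lev :: "'a \<Rightarrow> nat" and h :: nat and \<epsilon> :: real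
  assumes "0 < \<epsilon>" and "\<epsilon> < 1"
    and "matroid E indep"
    and "invariants E indep u k B ins lev h"
    and "real h > 1 / \<epsilon> + 2"
  shows "\<exists>j::nat.
     real (sum u {e \<in> E. lev e < j} + k * mrank indep {e \<in> E. lev e \<ge> j})
       \<le> (1 + \<epsilon>) * real (union_value E u k B)
     \<and> (\<forall>B'. (\<forall>i<k. is_basis E indep (B' i)) \<longrightarrow>
            real (union_value E u k B') \<le> (1 + \<epsilon>) * real (union_value E u k B))
     \<and> (\<forall>S \<subseteq> E. real (dual_value E indep u k {e \<in> E. lev e \<ge> j})
            \<le> (1 + \<epsilon>) * real (dual_value E indep u k S))"
proof -
  note M = assms(3) and inv = assms(4)
  have fE: "finite E"
    using matroid_finite[OF M] .
  have "0 < 1 / \<epsilon>"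
    using assms(1) by simp
  then have "1 \<le> h" and "1 / \<epsilon> < real h - 1"
    using assms(5) by linarith+
  then have "1 / \<epsilon> < real (h - 1)"
    by (simp add: of_nat_diff)
  then have "\<exists>l\<in>{1..h - 1}. real (\<Sum>e\<in>{e \<in> E. lev e = l}. min (u e) (mult k B e))
      \<le> \<epsilon> * real (union_value E u k B)"
    unfolding union_value_def by (rule exists_light_level[OF fE assms(1)])
  then obtain l where l: "1 \<le> l" "l < h" and
    light: "real (\<Sum>e\<in>{e \<in> E. lev e = l}. min (u e) (mult k B e)) \<le> \<epsilon> * real (union_value E u k B)"
    using \<open>1 \<le> h\<close> by fastforce
  let ?T = "{e \<in> E. Suc l \<le> lev e}"
  have "real (dual_value E indep u k ?T)
      \<le> real (union_value E u k B) + real (\<Sum>e\<in>{e \<in> E. lev e = l}. min (u e) (mult k B e))"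
    using dual_value_le_union_value_plus_layer[OF M inv l] by linarith
  then have dual: "real (dual_value E indep u k ?T) \<le> (1 + \<epsilon>) * real (union_value E u k B)"
    using light unfolding distrib_right by linarith
  have bases: "\<forall>i<k. is_basis E indep (B i)"
    using inv unfolding invariants_def by auto
  have "?T \<subseteq> E"
    by auto
  note optimal = approximately_optimal_by_dual[OF M bases less_imp_le[OF assms(1)] dual this]
  show ?thesis
    using dual optimal unfolding dual_value_upper_level_set by blast
qed

end
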